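(* Under the standing assumptions (H), for every fixed $\delta>0$, with $z(x)=\frac1a(\sqrt{2ax}+\delta\sqrt x)$, \[ \mathbf{P}\Big(A_\tau>x,\ \overline X_\tau\in\Big[y(x),\sqrt{2ax}-\tfrac{h(x)}{\log x}\Big],\ J_{\ge2},\ \tau\le z(x)\Big)=o\big(\overline F(\sqrt{2ax})\big),\qquad x\to\infty. \]
   Context: Standing assumptions (H): $X_1,X_2,\dots$ i.i.d. with $\mathbf{E}X_1=-a<0$, $\mathrm{Var}(X_1)<\infty$, $\overline F(x)=\mathbf{P}(X_1>x)\sim e^{-g(x)}x^{-2}$ as $x\to\infty$, where $g:(0,\infty)\to\mathbb{R}$ is continuously differentiable, nondecreasing for all large $x$, $x\mapsto g(x)/x^{\gamma_0}$ is nonincreasing on $(0,\infty)$ with limit $0$ for some $\gamma_0\in(0,1/2)$, and $xg'(x)\to\infty$. Notation: $S_0=0$, $S_n=X_1+\dots+X_n$, $\tau=\min\{n\ge1:S_n\le0\}$, $A_\tau=\sum_{k=0}^{\tau-1}S_k$, $\overline X_\tau=\max(X_1,\dots,X_\tau)$, $h(x)=\sqrt{2ax}/g(\sqrt{2ax})$, $y(x)=\sqrt{2ax}-C_0h(x)\log x$ for a fixed constant $C_0>\frac{5/4}{1-\gamma_0}$. $J_{\ge2}$ is the event that there exist two distinct indices $k,l\in\{1,\dots,\tau\}$ with $X_k>y(x)$ and $X_l>y(x)$. *)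

theory Defs
  imports "HOL-Probability.Probability" "HOL-Library.Landau_Symbols"
begin

text \<open>Random walk S_n = X_1 + ... + X_n (the sequence X is indexed from 1; X 0 is unused).\<close>
definition rw_S :: "(nat \<Rightarrow> 'a \<Rightarrow> real) \<Rightarrow> nat \<Rightarrow> 'a \<Rightarrow> real" where
  "rw_S X n \<omega> = (\<Sum>k\<in>{1..n}. X k \<omega>)"

definition Fbar :: "'a measure \<Rightarrow> (nat \<Rightarrow> 'a \<Rightarrow> real) \<Rightarrow> real \<Rightarrow> real" where
  "Fbar M X t = measure M {\<omega> \<in> space M. X 1 \<omega> > t}"

text \<open>tau(omega) = n, i.e. n = min{m >= 1 : S_m <= 0}.\<close>
definition tau_eq :: "(nat \<Rightarrow> 'a \<Rightarrow> real) \<Rightarrow> 'a \<Rightarrow> nat \<Rightarrow> bool" where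
  "tau_eq X \<omega> n \<longleftrightarrow> n \<ge> 1 \<and> rw_S X n \<omega> \<le> 0 \<and> (\<forall>m. 1 \<le> m \<and> m < n \<longrightarrow> rw_S X m \<omega> > 0)"

definition standing_H ::
  "'a measure \<Rightarrow> (nat \<Rightarrow> 'a \<Rightarrow> real) \<Rightarrow> real \<Rightarrow> (real \<Rightarrow> real) \<Rightarrow> real \<Rightarrow> bool" where
  "standing_H M X a g \<gamma>0 \<longleftrightarrow>
     prob_space M \<and>
     (\<forall>k\<ge>1. X k \<in> borel_measurable M) \<and>
     prob_space.indep_vars M (\<lambda>_. borel) X {1..} \<and>
     (\<forall>k\<ge>1. distr M borel (X k) = distr M borel (X 1)) \<and>
     a > 0 \<and> integrable M (X 1) \<and> integral\<^sup>L M (X 1) = - a \<and>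
     integrable M (\<lambda>\<omega>. (X 1 \<omega>)\<^sup>2) \<and>
     (Fbar M X \<sim>[at_top] (\<lambda>x. exp (- g x) * x powr (-2))) \<and>
     (\<forall>x>0. g differentiable (at x)) \<and> continuous_on {0<..} (deriv g) \<and>
     (\<exists>x0. \<forall>x y. x0 \<le> x \<and> x \<le> y \<longrightarrow> g x \<le> g y) \<and>
     0 < \<gamma>0 \<and> \<gamma>0 < 1/2 \<and>
     (\<forall>x y. 0 < x \<and> x \<le> y \<longrightarrow> g y / y powr \<gamma>0 \<le> g x / x powr \<gamma>0) \<and>
     ((\<lambda>x. g x / x powr \<gamma>0) \<longlongrightarrow> 0) at_top \<and>
     filterlim (\<lambda>x. x * deriv g x) at_top at_top"

definition h_fun :: "real \<Rightarrow> (real \<Rightarrow> real) \<Rightarrow> real \<Rightarrow> real" where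
  "h_fun a g x = sqrt (2 * a * x) / g (sqrt (2 * a * x))"

definition y_fun :: "real \<Rightarrow> (real \<Rightarrow> real) \<Rightarrow> real \<Rightarrow> real \<Rightarrow> real" where
  "y_fun a g C0 x = sqrt (2 * a * x) - C0 * h_fun a g x * ln x"

definition event11 ::
  "'a measure \<Rightarrow> (nat \<Rightarrow> 'a \<Rightarrow> real) \<Rightarrow> real \<Rightarrow> (real \<Rightarrow> real) \<Rightarrow> real \<Rightarrow> real \<Rightarrow> real \<Rightarrow> 'a set" where
  "event11 M X a g C0 \<delta> x = {\<omega> \<in> space M. \<exists>n. tau_eq X \<omega> n \<and>
      (\<Sum>k<n. rw_S X k \<omega>) > x \<and>
      y_fun a g C0 x \<le> Max ((\<lambda>k. X k \<omega>) ` {1..n}) \<and>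
      Max ((\<lambda>k. X k \<omega>) ` {1..n}) \<le> sqrt (2 * a * x) - h_fun a g x / ln x \<and>
      (\<exists>k l. k \<in> {1..n} \<and> l \<in> {1..n} \<and> k \<noteq> l \<and> X k \<omega> > y_fun a g C0 x \<and> X l \<omega> > y_fun a g C0 x) \<and>
      real n \<le> (sqrt (2 * a * x) + \<delta> * sqrt x) / a}"

end

theory Submission
  imports Defs "HOL-Real_Asymp.Real_Asymp"
begin

text \<open>
  On the event, two of the first floor(z(x)) increments exceed y(x), so a union bound over pairs
  bounds its probability by z(x)^2 F(y(x))^2. Since x g'(x) tends to infinity, g outgrows every
  multiple of log; hence y(x) = s (1 - o(1)) with s = sqrt(2ax), and the monotonicity of
  g(t)/t^gamma0 gives g(y(x)) >= 3/4 g(s). With F(t) of order exp(-g(t)) / t^2 the bound becomes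
  O(exp(-g(s)/2) F(s)), and g(s) tends to infinity.
\<close>

lemma Fbar_nonneg: "0 \<le> Fbar M X t"
  by (simp add: Fbar_def)

context prob_space
begin

lemma random_variable_if_indep_vars:
  "indep_vars M' X I \<Longrightarrow> i \<in> I \<Longrightarrow> random_variable (M' i) (X i)"
  by (simp add: indep_vars_def2)

lemma prob_gt_eq_Fbar:
  assumes "random_variable borel (X j)" "random_variable borel (X 1)"
    and "distr M borel (X j) = distr M borel (X 1)"
  shows "prob (X j -` {t<..} \<inter> space M) = Fbar M X t"
proof -
  have "prob (X j -` {t<..} \<inter> space M) = measure (distr M borel (X j)) {t<..}"
    using assms(1) by (simp add: measure_distr)
  also have "\<dots> = measure (distr M borel (X 1)) {t<..}"
    by (simp only: assms(3))
  also have "\<dots> = prob (X 1 -` {t<..} \<inter> space M)"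
    using assms(2) by (simp add: measure_distr)
  also have "\<dots> = Fbar M X t"
    unfolding Fbar_def by (rule arg_cong[where f = prob]) auto
  finally show ?thesis .
qed

lemma prob_both_gt:
  assumes indep: "indep_vars (\<lambda>_. borel) X {1..}"
    and ident: "\<forall>k\<ge>1. distr M borel (X k) = distr M borel (X 1)"
    and "k \<ge> 1" "l \<ge> 1" "k \<noteq> l"
  shows "prob {\<omega>\<in>space M. X k \<omega> > t \<and> X l \<omega> > t} = Fbar M X t ^ 2"
proof -
  have rv: "random_variable borel (X j)" if "j \<ge> 1" for j
    using random_variable_if_indep_vars[OF indep] that by simp
  have single: "prob (X j -` {t<..} \<inter> space M) = Fbar M X t" if "j \<ge> 1" for j
    using prob_gt_eq_Fbar[OF rv[OF that] rv ident[rule_format, OF that]] by simp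
  have "{\<omega>\<in>space M. X k \<omega> > t \<and> X l \<omega> > t} = (\<Inter>i\<in>{k,l}. X i -` {t<..} \<inter> space M)"
    by auto
  also have "prob \<dots> = (\<Prod>i\<in>{k,l}. prob (X i -` {t<..} \<inter> space M))"
    using assms(3-5) by (intro indep_varsD[OF indep]) auto
  also have "\<dots> = Fbar M X t ^ 2"
    using single assms(3-5) by (simp add: power2_eq_square)
  finally show ?thesis .
qed

lemma prob_two_gt_le:
  assumes indep: "indep_vars (\<lambda>_. borel) X {1..}"
    and ident: "\<forall>k\<ge>1. distr M borel (X k) = distr M borel (X 1)"
    and E: "E \<subseteq> {\<omega>\<in>space M. \<exists>k\<in>{1..N}. \<exists>l\<in>{1..N}. k \<noteq> l \<and> X k \<omega> > t \<and> X l \<omega> > t}"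
  shows "prob E \<le> real N ^ 2 * Fbar M X t ^ 2"
proof -
  define P where "P = {(k, l). k \<in> {1..N} \<and> l \<in> {1..N} \<and> k \<noteq> l}"
  define A where "A = (\<lambda>(k, l). {\<omega>\<in>space M. X k \<omega> > t \<and> X l \<omega> > t})"
  have P_sub: "P \<subseteq> {1..N} \<times> {1..N}"
    by (auto simp: P_def)
  hence "finite P"
    by (rule finite_subset) simp
  have A_events: "A p \<in> events" if "p \<in> P" for p
  proof -
    obtain k l where "p = (k, l)" "k \<ge> 1" "l \<ge> 1"
      using \<open>p \<in> P\<close> by (auto simp: P_def)
    thus ?thesis
      using random_variable_if_indep_vars[OF indep] by (simp add: A_def)
  qed
  have "E \<subseteq> (\<Union>p\<in>P. A p)"
    using E unfolding P_def A_def by fastforce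
  hence "prob E \<le> prob (\<Union>p\<in>P. A p)"
    using \<open>finite P\<close> A_events by (intro finite_measure_mono) auto
  also have "\<dots> \<le> (\<Sum>p\<in>P. prob (A p))"
    using \<open>finite P\<close> A_events by (intro finite_measure_subadditive_finite) auto
  also have "\<dots> = (\<Sum>p\<in>P. Fbar M X t ^ 2)"
    by (intro sum.cong refl) (auto simp: P_def A_def prob_both_gt[OF indep ident])
  also have "\<dots> \<le> real N ^ 2 * Fbar M X t ^ 2"
  proof -
    have "card P \<le> N ^ 2"
      using card_mono[OF _ P_sub] by (simp add: power2_eq_square)
    hence "real (card P) \<le> real N ^ 2"
      by (simp flip: of_nat_power)
    thus ?thesis
      by (simp add: mult_right_mono)
  qed
  finally show ?thesis .
qed

end

lemma event11_subset_two_gt: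
  "event11 M X a g C0 \<delta> x \<subseteq>
     {\<omega>\<in>space M. \<exists>k\<in>{1..nat \<lfloor>(sqrt (2 * a * x) + \<delta> * sqrt x) / a\<rfloor>}.
        \<exists>l\<in>{1..nat \<lfloor>(sqrt (2 * a * x) + \<delta> * sqrt x) / a\<rfloor>}.
        k \<noteq> l \<and> X k \<omega> > y_fun a g C0 x \<and> X l \<omega> > y_fun a g C0 x}"
  (is "_ \<subseteq> {\<omega>\<in>space M. \<exists>k\<in>{1..?N}. \<exists>l\<in>{1..?N}. ?two k l \<omega>}")
proof
  fix \<omega> assume "\<omega> \<in> event11 M X a g C0 \<delta> x"
  then obtain n k l where "\<omega> \<in> space M" "real n \<le> (sqrt (2 * a * x) + \<delta> * sqrt x) / a"
      "k \<in> {1..n}" "l \<in> {1..n}" "?two k l \<omega>"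
    unfolding event11_def by blast
  moreover from this(2) have "n \<le> ?N"
    by (rule le_nat_floor)
  ultimately have "\<omega> \<in> space M" "k \<in> {1..?N}" "l \<in> {1..?N}" "?two k l \<omega>"
    by auto
  thus "\<omega> \<in> {\<omega>\<in>space M. \<exists>k\<in>{1..?N}. \<exists>l\<in>{1..?N}. ?two k l \<omega>}"
    by blast
qed

lemma g_over_ln_at_top:
  fixes g :: "real \<Rightarrow> real"
  assumes diff: "\<forall>x>0. g differentiable (at x)"
    and lim: "filterlim (\<lambda>x. x * deriv g x) at_top at_top"
  shows "filterlim (\<lambda>t. g t / ln t) at_top at_top"
  unfolding filterlim_at_top_gt[where c = 0]
proof (intro allI impI)
  fix K :: real assume "K > 0"
  obtain t0 where t0: "\<And>x. x \<ge> t0 \<Longrightarrow> 2 * K \<le> x * deriv g x \<and> x \<ge> 1"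
    using eventually_conj[OF lim[unfolded filterlim_at_top, rule_format, of "2 * K"] eventually_ge_at_top[of 1]]
    by (auto simp: eventually_at_top_linorder)
  define c where "c = g t0 - 2 * K * ln t0"
  have lower: "2 * K * ln t + c \<le> g t" if "t0 \<le> t" for t
  proof -
    have "g t0 - 2 * K * ln t0 \<le> g t - 2 * K * ln t"
    proof (rule DERIV_nonneg_imp_nondecreasing[OF that])
      fix u assume "t0 \<le> u"
      with t0 have "u \<ge> 1" "2 * K \<le> u * deriv g u" by auto
      have "(g has_real_derivative deriv g u) (at u)"
        using diff \<open>u \<ge> 1\<close> by (simp add: DERIV_deriv_iff_real_differentiable)
      hence "((\<lambda>u. g u - 2 * K * ln u) has_real_derivative deriv g u - 2 * K * inverse u) (at u)"
        using \<open>u \<ge> 1\<close> by (auto intro!: derivative_eq_intros simp: field_simps)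
      moreover have "2 * K * inverse u \<le> deriv g u"
        using \<open>2 * K \<le> u * deriv g u\<close> \<open>u \<ge> 1\<close> by (simp add: field_simps)
      ultimately show "\<exists>y. ((\<lambda>u. g u - 2 * K * ln u) has_real_derivative y) (at u) \<and> 0 \<le> y"
        by auto
    qed
    thus ?thesis
      by (simp add: c_def)
  qed
  have "eventually (\<lambda>t. \<bar>c\<bar> / K + 1 \<le> ln t) at_top"
    using ln_at_top by (simp add: filterlim_at_top)
  with eventually_ge_at_top[of t0] show "eventually (\<lambda>t. K \<le> g t / ln t) at_top"
  proof eventually_elim
    case (elim t)
    hence "\<bar>c\<bar> + K \<le> K * ln t"
      using \<open>K > 0\<close> by (simp add: field_simps)
    moreover have "2 * K * ln t + c \<le> g t"
      using lower[OF elim(1)] .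
    moreover have "- \<bar>c\<bar> \<le> c"
      by simp
    ultimately have "0 < K * ln t" "K * ln t \<le> g t"
      using \<open>K > 0\<close> by linarith+
    hence "0 < ln t" "K * ln t \<le> g t"
      using \<open>K > 0\<close> by (simp_all add: zero_less_mult_iff)
    thus ?case
      by (simp add: field_simps)
  qed
qed

lemma scaled_le_of_ratio_powr_antimono:
  fixes g :: "real \<Rightarrow> real"
  assumes ratio: "\<forall>x y. 0 < x \<and> x \<le> y \<longrightarrow> g y / y powr \<gamma> \<le> g x / x powr \<gamma>"
    and "0 \<le> \<gamma>" "\<gamma> \<le> 1" "0 < y" "y \<le> s" "0 \<le> g s"
  shows "y / s * g s \<le> g y"
proof -
  have "y / s \<le> (y / s) powr \<gamma>"
    using powr_mono'[of \<gamma> 1 "y / s"] assms(2-5) by simp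
  also have "\<dots> = y powr \<gamma> / s powr \<gamma>"
    using assms(4,5) by (simp add: powr_divide)
  finally have "y / s * g s \<le> y powr \<gamma> / s powr \<gamma> * g s"
    using \<open>0 \<le> g s\<close> by (rule mult_right_mono)
  also have "\<dots> = y powr \<gamma> * (g s / s powr \<gamma>)"
    by simp
  also have "\<dots> \<le> y powr \<gamma> * (g y / y powr \<gamma>)"
    using ratio assms(4,5) by (intro mult_left_mono) auto
  also have "\<dots> = g y"
    using assms(4) by simp
  finally show ?thesis .
qed

lemma ln_div_g_sqrt_tendsto_0:
  fixes g :: "real \<Rightarrow> real"
  assumes "a > 0" and gl: "filterlim (\<lambda>t. g t / ln t) at_top at_top"
  shows "((\<lambda>x. ln x / g (sqrt (2 * a * x))) \<longlongrightarrow> 0) at_top"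
proof -
  have s_lim: "filterlim (\<lambda>x. sqrt (2 * a * x)) at_top at_top"
    using \<open>a > 0\<close> by real_asymp
  have "((\<lambda>x. ln x / ln (sqrt (2 * a * x))) \<longlongrightarrow> 2) at_top"
    using \<open>a > 0\<close> by real_asymp
  moreover have "((\<lambda>x. inverse (g (sqrt (2 * a * x)) / ln (sqrt (2 * a * x)))) \<longlongrightarrow> 0) at_top"
    by (intro tendsto_inverse_0_at_top filterlim_compose[OF gl s_lim])
  ultimately have "((\<lambda>x. ln x / ln (sqrt (2 * a * x)) * inverse (g (sqrt (2 * a * x)) / ln (sqrt (2 * a * x))))
      \<longlongrightarrow> 0) at_top"
    using tendsto_mult by fastforce
  moreover have "eventually (\<lambda>x. ln (sqrt (2 * a * x)) > 0) at_top"
    using \<open>a > 0\<close> by real_asymp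
  ultimately show ?thesis
    by (rule Lim_transform_eventually[OF _ eventually_mono]) simp_all
qed

lemma eventually_y_fun_bounds:
  fixes g :: "real \<Rightarrow> real"
  assumes "a > 0" "C0 > 0" "0 \<le> \<gamma>" "\<gamma> \<le> 1"
    and ratio: "\<forall>x y. 0 < x \<and> x \<le> y \<longrightarrow> g y / y powr \<gamma> \<le> g x / x powr \<gamma>"
    and gl: "filterlim (\<lambda>t. g t / ln t) at_top at_top"
  shows "eventually (\<lambda>x. 3/4 * sqrt (2 * a * x) \<le> y_fun a g C0 x \<and>
                         3/4 * g (sqrt (2 * a * x)) \<le> g (y_fun a g C0 x)) at_top"
proof -
  define s where "s x = sqrt (2 * a * x)" for x
  have s_lim: "filterlim s at_top at_top"
    unfolding s_def using \<open>a > 0\<close> by real_asymp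
  have "((\<lambda>x. C0 * (ln x / g (s x))) \<longlongrightarrow> C0 * 0) at_top"
    unfolding s_def by (intro tendsto_mult tendsto_const ln_div_g_sqrt_tendsto_0 \<open>a > 0\<close> gl)
  hence "eventually (\<lambda>x. C0 * (ln x / g (s x)) < 1/4) at_top"
    by (rule order_tendstoD) simp
  moreover have "eventually (\<lambda>x. 1 \<le> g (s x) / ln (s x)) at_top"
    using filterlim_compose[OF gl s_lim] by (simp add: filterlim_at_top)
  moreover have "eventually (\<lambda>x. 0 < ln (s x)) at_top" "eventually (\<lambda>x::real. 1 < x) at_top"
    unfolding s_def using \<open>a > 0\<close> by real_asymp+
  ultimately show ?thesis
    unfolding s_def[symmetric]
  proof eventually_elim
    case (elim x)
    define r where "r = C0 * (ln x / g (s x))"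
    have "0 < g (s x)"
      using elim(2,3) by (simp add: field_simps)
    hence "0 \<le> r" "r \<le> 1/4"
      using elim(1,4) \<open>C0 > 0\<close> by (auto simp: r_def)
    have "0 < s x"
      using elim(4) \<open>a > 0\<close> by (simp add: s_def)
    have y_eq: "y_fun a g C0 x = s x * (1 - r)"
      using \<open>0 < g (s x)\<close> by (simp add: y_fun_def h_fun_def s_def r_def field_simps)
    have "3/4 * s x \<le> y_fun a g C0 x"
      using \<open>r \<le> 1/4\<close> \<open>0 < s x\<close> unfolding y_eq by (simp add: mult_left_mono)
    moreover have "y_fun a g C0 x \<le> s x"
      using \<open>0 \<le> r\<close> \<open>0 < s x\<close> unfolding y_eq by (simp add: mult_left_le)
    moreover have "y_fun a g C0 x / s x = 1 - r"
      using \<open>0 < s x\<close> unfolding y_eq by simp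
    moreover have "0 < y_fun a g C0 x"
      using \<open>3/4 * s x \<le> y_fun a g C0 x\<close> \<open>0 < s x\<close> by linarith
    ultimately have "(1 - r) * g (s x) \<le> g (y_fun a g C0 x)"
      using scaled_le_of_ratio_powr_antimono[OF ratio \<open>0 \<le> \<gamma>\<close> \<open>\<gamma> \<le> 1\<close>, of "y_fun a g C0 x" "s x"]
        \<open>0 < g (s x)\<close> by simp
    moreover have "3/4 * g (s x) \<le> (1 - r) * g (s x)"
      using \<open>r \<le> 1/4\<close> \<open>0 < g (s x)\<close> by (intro mult_right_mono) auto
    ultimately show ?case
      using \<open>3/4 * s x \<le> y_fun a g C0 x\<close> by linarith
  qed
qed

lemma two_tails_le_exp_half:
  fixes s y gs gy Fs Fy z c :: real
  assumes "0 < s" "3/4 * s \<le> y" "3/4 * gs \<le> gy"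
    and "0 \<le> Fy" "Fy \<le> 2 * exp (- gy) / y^2" "exp (- gs) / s^2 / 2 \<le> Fs"
    and "0 \<le> z" "z \<le> c * s"
  shows "z^2 * Fy^2 \<le> 26 * c^2 * exp (- gs / 2) * Fs"
proof -
  have "0 < y"
    using assms(1,2) by linarith
  have "(3/4 * s)^2 \<le> y^2"
    using assms(1,2) by (intro power_mono) auto
  with assms(5) have "Fy \<le> 2 * exp (- (3/4 * gs)) / (3/4 * s)^2"
    using assms(1,3) by (elim order_trans, intro frac_le) auto
  hence "Fy^2 \<le> (2 * exp (- (3/4 * gs)) / (3/4 * s)^2)^2"
    using assms(4) by (intro power_mono)
  also have "\<dots> = (32/9)^2 * exp (- gs / 2) * (exp (- gs) / s^2) / s^2"
    by (simp add: power2_eq_square field_simps flip: exp_add)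
  also have "\<dots> \<le> (32/9)^2 * exp (- gs / 2) * (2 * Fs) / s^2"
    using assms(6) by (intro divide_right_mono mult_left_mono) auto
  finally have Fy2: "Fy^2 \<le> (32/9)^2 * exp (- gs / 2) * (2 * Fs) / s^2" .
  have "z^2 \<le> (c * s)^2"
    using assms(7,8) by (intro power_mono)
  have "0 \<le> Fs"
    using assms(6) by (smt (verit) divide_nonneg_nonneg exp_ge_zero zero_le_power2)
  have "z^2 * Fy^2 \<le> (c * s)^2 * ((32/9)^2 * exp (- gs / 2) * (2 * Fs) / s^2)"
    using \<open>z^2 \<le> (c * s)^2\<close> Fy2 by (intro mult_mono) auto
  also have "\<dots> = 2048/81 * c^2 * exp (- gs / 2) * Fs"
    using assms(1) by (simp add: field_simps power2_eq_square)
  also have "\<dots> \<le> 26 * c^2 * exp (- gs / 2) * Fs"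
    using \<open>0 \<le> Fs\<close> by (intro mult_right_mono) auto
  finally show ?thesis .
qed

lemma smallo_if_le_vanishing_multiple:
  fixes f h r :: "'a \<Rightarrow> real"
  assumes "eventually (\<lambda>x. 0 \<le> f x \<and> f x \<le> r x * h x) F" "(r \<longlongrightarrow> 0) F"
    and "eventually (\<lambda>x. 0 \<le> h x) F"
  shows "f \<in> o[F](h)"
proof (rule landau_o.smallI)
  fix c :: real assume "c > 0"
  with \<open>(r \<longlongrightarrow> 0) F\<close> have "eventually (\<lambda>x. r x < c) F"
    by (rule order_tendstoD)
  with assms(1,3) show "eventually (\<lambda>x. norm (f x) \<le> c * norm (h x)) F"
  proof eventually_elim
    case (elim x)
    hence "r x * h x \<le> c * h x"
      by (intro mult_right_mono) auto
    with elim show ?case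
      by simp
  qed
qed

lemma at_top_if_over_ln_at_top:
  fixes f :: "real \<Rightarrow> real"
  assumes "filterlim (\<lambda>t. f t / ln t) at_top at_top"
  shows "filterlim f at_top at_top"
proof -
  have "filterlim (\<lambda>t. f t / ln t * ln t) at_top at_top"
    using assms ln_at_top by (rule filterlim_at_top_mult_at_top)
  moreover have "eventually (\<lambda>t. f t / ln t * ln t = f t) at_top"
    using eventually_gt_at_top[of 1] by eventually_elim simp
  ultimately show ?thesis
    by (simp add: filterlim_cong)
qed

lemma eventually_Fbar_bounds:
  assumes "Fbar M X \<sim>[at_top] (\<lambda>x. exp (- g x) * x powr (-2))"
  shows "eventually (\<lambda>t. exp (- g t) / t^2 / 2 \<le> Fbar M X t \<and> Fbar M X t \<le> 2 * exp (- g t) / t^2) at_top"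
proof -
  have "eventually (\<lambda>t. 1/2 * norm (exp (- g t) * t powr (-2)) \<le> norm (Fbar M X t)) at_top"
    by (rule asymp_equiv_imp_eventually_ge[OF assms]) simp
  moreover have "eventually (\<lambda>t. norm (Fbar M X t) \<le> 2 * norm (exp (- g t) * t powr (-2))) at_top"
    by (rule asymp_equiv_imp_eventually_le[OF assms]) simp
  ultimately show ?thesis
    using eventually_gt_at_top[of 0]
  proof eventually_elim
    case (elim t)
    have "exp (- g t) * t powr (-2) = exp (- g t) / t^2"
      using \<open>t > 0\<close> by (simp add: powr_minus powr_numeral divide_inverse)
    with elim show ?case
      using Fbar_nonneg[of M X t] by simp
  qed
qed

lemma event11_eventually_le:
  assumes H: "standing_H M X a g \<gamma>0" and "C0 > 0" "\<delta> \<ge> 0"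
  shows "\<exists>K. eventually (\<lambda>x. measure M (event11 M X a g C0 \<delta> x)
           \<le> K * exp (- g (sqrt (2 * a * x)) / 2) * Fbar M X (sqrt (2 * a * x))) at_top"
proof -
  have "prob_space M" and indep: "prob_space.indep_vars M (\<lambda>_. borel) X {1..}"
    and ident: "\<forall>k\<ge>1. distr M borel (X k) = distr M borel (X 1)"
    and "a > 0" and asy: "Fbar M X \<sim>[at_top] (\<lambda>x. exp (- g x) * x powr (-2))"
    and diff: "\<forall>x>0. g differentiable (at x)" and "0 < \<gamma>0" "\<gamma>0 < 1/2"
    and ratio: "\<forall>x y. 0 < x \<and> x \<le> y \<longrightarrow> g y / y powr \<gamma>0 \<le> g x / x powr \<gamma>0"
    and lim: "filterlim (\<lambda>x. x * deriv g x) at_top at_top"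
    using H unfolding standing_H_def by blast+
  interpret prob_space M by fact
  define s where "s x = sqrt (2 * a * x)" for x
  define y where "y x = y_fun a g C0 x" for x
  define c where "c = (1 + \<delta> / sqrt (2 * a)) / a"
  have s_lim: "filterlim s at_top at_top"
    unfolding s_def using \<open>a > 0\<close> by real_asymp
  have ys: "eventually (\<lambda>x. 3/4 * s x \<le> y x \<and> 3/4 * g (s x) \<le> g (y x)) at_top"
    using eventually_y_fun_bounds[OF \<open>a > 0\<close> \<open>C0 > 0\<close> _ _ ratio g_over_ln_at_top[OF diff lim]]
      \<open>0 < \<gamma>0\<close> \<open>\<gamma>0 < 1/2\<close> by (simp add: s_def y_def)
  have "filterlim y at_top at_top"
  proof (rule filterlim_at_top_mono)
    show "filterlim (\<lambda>x. 3/4 * s x) at_top at_top"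
      by (rule filterlim_tendsto_pos_mult_at_top[OF tendsto_const _ s_lim]) simp
  qed (use ys in \<open>auto elim: eventually_mono\<close>)
  note Fs = eventually_compose_filterlim[OF eventually_Fbar_bounds[OF asy] s_lim]
  note Fy = eventually_compose_filterlim[OF eventually_Fbar_bounds[OF asy] \<open>filterlim y at_top at_top\<close>]
  have "eventually (\<lambda>x. measure M (event11 M X a g C0 \<delta> x) \<le> 26 * c^2 * exp (- g (s x) / 2) * Fbar M X (s x)) at_top"
    using ys Fs Fy eventually_gt_at_top[of 0]
  proof eventually_elim
    case (elim x)
    define N where "N = nat \<lfloor>(sqrt (2 * a * x) + \<delta> * sqrt x) / a\<rfloor>"
    have "(sqrt (2 * a * x) + \<delta> * sqrt x) / a = c * s x"
      using \<open>a > 0\<close> by (simp add: c_def s_def real_sqrt_mult field_simps)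
    moreover have "0 \<le> c * s x"
      using \<open>a > 0\<close> \<open>\<delta> \<ge> 0\<close> \<open>x > 0\<close> by (simp add: c_def s_def)
    ultimately have "real N \<le> c * s x"
      unfolding N_def by linarith
    have "measure M (event11 M X a g C0 \<delta> x) \<le> real N ^ 2 * Fbar M X (y x) ^ 2"
      unfolding N_def y_def by (rule prob_two_gt_le[OF indep ident event11_subset_two_gt])
    also have "\<dots> \<le> 26 * c^2 * exp (- g (s x) / 2) * Fbar M X (s x)"
      using elim \<open>real N \<le> c * s x\<close> \<open>a > 0\<close> Fbar_nonneg[of M X "y x"]
      by (intro two_tails_le_exp_half) (auto simp: s_def)
    finally show ?case .
  qed
  thus ?thesis
    unfolding s_def by blast
qed

theorem mainTheorem11:
  fixes M :: "'a measure" and X :: "nat \<Rightarrow> 'a \<Rightarrow> real"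
    and a \<gamma>0 C0 \<delta> :: real and g :: "real \<Rightarrow> real"
  assumes "standing_H M X a g \<gamma>0"
    and "C0 > (5/4) / (1 - \<gamma>0)"
    and "\<delta> > 0"
  shows "(\<lambda>x. measure M (event11 M X a g C0 \<delta> x)) \<in> o[at_top](\<lambda>x. Fbar M X (sqrt (2 * a * x)))"
proof -
  have "a > 0" "\<gamma>0 < 1/2" and diff: "\<forall>x>0. g differentiable (at x)"
    and lim: "filterlim (\<lambda>x. x * deriv g x) at_top at_top"
    using assms(1) unfolding standing_H_def by blast+
  have "C0 > 0"
    using assms(2) \<open>\<gamma>0 < 1/2\<close> zero_less_divide_iff[of "5/4" "1 - \<gamma>0"] by linarith
  obtain K where bound: "eventually (\<lambda>x. measure M (event11 M X a g C0 \<delta> x)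
      \<le> K * exp (- g (sqrt (2 * a * x)) / 2) * Fbar M X (sqrt (2 * a * x))) at_top"
    using event11_eventually_le[OF assms(1) \<open>C0 > 0\<close> less_imp_le[OF assms(3)]] by blast
  have gs: "filterlim (\<lambda>x. g (sqrt (2 * a * x))) at_top at_top"
    using \<open>a > 0\<close> by (intro filterlim_compose[OF at_top_if_over_ln_at_top[OF g_over_ln_at_top[OF diff lim]]]) real_asymp
  have "filterlim (\<lambda>x. g (sqrt (2 * a * x)) / 2) at_top at_top"
    using filterlim_tendsto_pos_mult_at_top[OF tendsto_const _ gs, of "1/2"] by simp
  hence "((\<lambda>x. exp (- (g (sqrt (2 * a * x)) / 2))) \<longlongrightarrow> 0) at_top"
    by (intro filterlim_compose[OF exp_at_bot] filterlim_uminus_at_top[THEN iffD1])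
  hence "((\<lambda>x. K * exp (- g (sqrt (2 * a * x)) / 2)) \<longlongrightarrow> 0) at_top"
    using tendsto_mult_right_zero by simp
  thus ?thesis
    using bound by (intro smallo_if_le_vanishing_multiple) (auto simp: Fbar_nonneg elim: eventually_mono)
qed

end
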